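(* Let $n\ge1$ and $s\ge0$ be integers such that $\lambda=3^{(n+s-1)/2}$ is an integer. Let $D_0,D_1,D_2$ be a partition of $\mathbb{F}_{3^n}$ such that each $D_i$ is a partial geometric difference set in the additive group of $\mathbb{F}_{3^n}$ and $\chi_a(D_i)\in\{0,\pm\lambda,\pm\lambda\zeta_3,\pm\lambda\zeta_3^2\}$ for every $a\in\mathbb{F}_{3^n}^*$ and $i=0,1,2$. Suppose one of the following holds: (1) $|D_0|=|D_1|=|D_2|$; (2) for some ordering $\{i,j,k\}=\{0,1,2\}$, $|D_i|=|D_j|=3^{n-1}-3^{(n+s-2)/2}$ and $|D_k|=3^{n-1}+2\cdot3^{(n+s-2)/2}$; (3) for some ordering $\{i,j,k\}=\{0,1,2\}$, $|D_i|=|D_j|=3^{n-1}+3^{(n+s-2)/2}$ and $|D_k|=3^{n-1}-2\cdot3^{(n+s-2)/2}$. Suppose further that $|\langle z_a,e\rangle|^2\in\{0,3\lambda^2\}$ for every $a\in\mathbb{F}_{3^n}^*$. Then the function $f:\mathbb{F}_{3^n}\to\mathbb{F}_3$ defined by $f(x)=i$ for $x\in D_i$ is $s$-plateaued.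
   Context: $\zeta_3=e^{2\pi i/3}$, $Tr_n(z)=\sum_{i=0}^{n-1}z^{3^i}$. For $a\in\mathbb{F}_{3^n}$, $\chi_a$ is the additive character $\chi_a(x)=\zeta_3^{Tr_n(ax)}$, and $\chi_a(S)=\sum_{x\in S}\chi_a(x)$. $z_a=(\chi_a(D_0),\chi_a(D_1),\chi_a(D_2))\in\mathbb{C}^3$, $e=(1,\zeta_3,\zeta_3^2)$, and $\langle u,w\rangle=\sum_i u_i\overline{w_i}$ is the complex inner product. Partial geometric difference set: $S\subseteq G$ ($G$ abelian of order $v$, $|S|=k$, $v>k>2$) such that, with $\delta(g)=|\{(s,t)\in S\times S:g=s-t\}|$, $\sum_{y\in S}\delta(x-y)$ equals a constant $\alpha$ for $x\notin S$ and a constant $\beta$ for $x\in S$. A function $f:\mathbb{F}_{3^n}\to\mathbb{F}_3$ is $s$-plateaued if $|\widehat f(\mu)|\in\{0,3^{(n+s)/2}\}$ for all $\mu$, where $\widehat f(\mu)=\sum_{x}\zeta_3^{f(x)-Tr_n(\mu x)}$. *)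

theory Defs
  imports Complex_Main
begin

definition zeta3 :: complex where
  "zeta3 = cis (2 * pi / 3)"

definition trace3 :: "nat \<Rightarrow> 'a::field \<Rightarrow> 'a" where
  "trace3 n z = (\<Sum>i<n. z ^ (3 ^ i))"

definition f3_rep :: "'a::field \<Rightarrow> nat" where
  "f3_rep t = (THE k. k < 3 \<and> of_nat k = t)"

definition addchar :: "nat \<Rightarrow> 'a::field \<Rightarrow> 'a \<Rightarrow> complex" where
  "addchar n a x = zeta3 ^ f3_rep (trace3 n (a * x))"

definition addchar_set :: "nat \<Rightarrow> 'a::field \<Rightarrow> 'a set \<Rightarrow> complex" where
  "addchar_set n a S = (\<Sum>x\<in>S. addchar n a x)"

definition diff_count :: "'a::ab_group_add set \<Rightarrow> 'a \<Rightarrow> nat" where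
  "diff_count S g = card {(s, t). s \<in> S \<and> t \<in> S \<and> g = s - t}"

definition partial_geometric_difference_set :: "'a::{ab_group_add,finite} set \<Rightarrow> bool" where
  "partial_geometric_difference_set S \<longleftrightarrow>
     card (UNIV :: 'a set) > card S \<and> card S > 2 \<and>
     (\<exists>\<alpha> \<beta>. (\<forall>x. x \<notin> S \<longrightarrow> (\<Sum>y\<in>S. diff_count S (x - y)) = \<alpha>) \<and>
             (\<forall>x. x \<in> S \<longrightarrow> (\<Sum>y\<in>S. diff_count S (x - y)) = \<beta>))"

text \<open>Walsh transform of f : F_{3^n} -> F_3, with F_3 represented by {0,1,2}.\<close>
definition walsh3 :: "nat \<Rightarrow> ('a::{field,finite} \<Rightarrow> nat) \<Rightarrow> 'a \<Rightarrow> complex" where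
  "walsh3 n f \<mu> = (\<Sum>x\<in>UNIV. zeta3 powi (int (f x) - int (f3_rep (trace3 n (\<mu> * x)))))"

definition plateaued3 :: "nat \<Rightarrow> nat \<Rightarrow> ('a::{field,finite} \<Rightarrow> nat) \<Rightarrow> bool" where
  "plateaued3 n s f \<longleftrightarrow>
     (\<forall>\<mu>. cmod (walsh3 n f \<mu>) \<in> {0, 3 powr ((real n + real s) / 2)})"

end

(* Splitting the Walsh sum along the partition gives
   walsh3 n f mu = conj <z_mu, e>, so for mu \<noteq> 0 the hypothesis on |<z_a, e>|^2
   yields |walsh3 n f mu| \<in> {0, sqrt 3 * lambda} = {0, 3^((n+s)/2)}.  For mu = 0 every
   character value is |D_i| times one and the same unit, so |walsh3 n f 0| is the norm
   of |D_0| + |D_1| zeta3 + |D_2| zeta3^2; since 1 + zeta3 + zeta3^2 = 0, each of the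
   three admissible size patterns makes this 0 or 3 * 3^((n+s-2)/2). *)
theory Submission
  imports Defs
begin

lemma zeta3_cube: "zeta3 ^ 3 = 1"
  unfolding zeta3_def DeMoivre by simp

lemma norm_zeta3: "cmod zeta3 = 1"
  unfolding zeta3_def by simp

lemma norm_zeta3_power: "cmod (zeta3 ^ k) = 1"
  by (simp add: norm_power norm_zeta3)

lemma zeta3_neq_1: "zeta3 \<noteq> 1"
proof
  assume "zeta3 = 1"
  moreover have "Re zeta3 = -1/2"
    unfolding zeta3_def by (simp add: cos_120)
  ultimately show False by simp
qed

lemma zeta3_power_sum: "1 + zeta3 + zeta3\<^sup>2 = 0"
proof -
  have "(zeta3 - 1) * (1 + zeta3 + zeta3\<^sup>2) = zeta3 ^ 3 - 1"
    by (simp add: algebra_simps power2_eq_square power3_eq_cube)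
  with zeta3_cube zeta3_neq_1 show ?thesis by simp
qed

lemma zeta3_powi_diff: "zeta3 powi (int a - int b) = zeta3 ^ a * cnj (zeta3 ^ b)"
proof -
  have "zeta3 \<noteq> 0" using norm_zeta3 by auto
  then have "zeta3 powi (int a - int b) = zeta3 ^ a / zeta3 ^ b"
    by (simp add: power_int_diff)
  then show ?thesis by (simp add: divide_conv_cnj norm_zeta3_power)
qed

lemma norm_sum_zeta3_powers:
  fixes c :: "nat \<Rightarrow> real"
  assumes ijk: "{i, j, k} = {0, 1, 2::nat}"
    and ci: "c i = a" and cj: "c j = a" and ck: "c k = a + b"
  shows "cmod (\<Sum>m<3. complex_of_real (c m) * zeta3 ^ m) = \<bar>b\<bar>"
proof -
  have c_eq: "c m = a + (if m = k then b else 0)" if "m \<in> {0, 1, 2}" for m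
    using that ijk ci cj ck by (cases "m = k") auto
  have k: "k \<in> {0, 1, 2}" using ijk by blast
  have "(\<Sum>m<3. complex_of_real (c m) * zeta3 ^ m) = c 0 + c 1 * zeta3 + c 2 * zeta3\<^sup>2"
    by (simp add: numeral_3_eq_3 lessThan_Suc eval_nat_numeral)
  also have "\<dots> = a * (1 + zeta3 + zeta3\<^sup>2) + b * zeta3 ^ k"
    using k c_eq[of 0] c_eq[of 1] c_eq[of 2] by (auto simp: algebra_simps)
  finally show ?thesis by (simp add: zeta3_power_sum norm_mult norm_zeta3_power)
qed

lemma norm_sum_zeta3_powers_size_patterns:
  fixes c :: "nat \<Rightarrow> real" and N B :: real
  assumes "B \<ge> 0"
    and "(c 0 = c 1 \<and> c 1 = c 2) \<or>
       (\<exists>i j k. {i, j, k} = {0, 1, 2::nat} \<and> c i = N - B \<and> c j = N - B \<and> c k = N + 2 * B) \<or>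
       (\<exists>i j k. {i, j, k} = {0, 1, 2::nat} \<and> c i = N + B \<and> c j = N + B \<and> c k = N - 2 * B)"
  shows "cmod (\<Sum>m<3. complex_of_real (c m) * zeta3 ^ m) \<in> {0, 3 * B}"
  using assms(2)
proof (elim disjE exE conjE)
  assume "c 0 = c 1" "c 1 = c 2"
  then have "cmod (\<Sum>m<3. complex_of_real (c m) * zeta3 ^ m) = \<bar>0\<bar>"
    by (intro norm_sum_zeta3_powers[where a = "c 0" and i = 1 and j = 2 and k = 0]) auto
  then show ?thesis by simp
next
  fix i j k assume ijk: "{i, j, k} = {0, 1, 2::nat}"
    and "c i = N - B" "c j = N - B" "c k = N + 2 * B"
  then have "cmod (\<Sum>m<3. complex_of_real (c m) * zeta3 ^ m) = \<bar>3 * B\<bar>"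
    by (intro norm_sum_zeta3_powers[OF ijk]) auto
  then show ?thesis using assms(1) by simp
next
  fix i j k assume ijk: "{i, j, k} = {0, 1, 2::nat}"
    and "c i = N + B" "c j = N + B" "c k = N - 2 * B"
  then have "cmod (\<Sum>m<3. complex_of_real (c m) * zeta3 ^ m) = \<bar>- (3 * B)\<bar>"
    by (intro norm_sum_zeta3_powers[OF ijk]) auto
  then show ?thesis using assms(1) by simp
qed

lemma walsh3_partition:
  fixes D :: "nat \<Rightarrow> 'a::{field,finite} set" and f :: "'a \<Rightarrow> nat"
  assumes cover: "(\<Union>i<3. D i) = UNIV"
    and disj: "\<forall>i<3. \<forall>j<3. i \<noteq> j \<longrightarrow> D i \<inter> D j = {}"
    and f_D: "\<forall>i<3. \<forall>x\<in>D i. f x = i"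
  shows "walsh3 n f \<mu> = (\<Sum>i<3. zeta3 ^ i * cnj (addchar_set n \<mu> (D i)))"
proof -
  let ?g = "\<lambda>x. zeta3 powi (int (f x) - int (f3_rep (trace3 n (\<mu> * x))))"
  have "walsh3 n f \<mu> = sum ?g (\<Union>i<3. D i)"
    unfolding walsh3_def cover ..
  also have "\<dots> = (\<Sum>i<3. sum ?g (D i))"
    by (rule sum.UNION_disjoint) (use disj in auto)
  also have "\<dots> = (\<Sum>i<3. zeta3 ^ i * cnj (addchar_set n \<mu> (D i)))"
  proof (rule sum.cong[OF refl])
    fix i assume "i \<in> {..<3::nat}"
    with f_D have "sum ?g (D i) = (\<Sum>x\<in>D i. zeta3 ^ i * cnj (addchar n \<mu> x))"
      by (auto simp: zeta3_powi_diff addchar_def)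
    then show "sum ?g (D i) = zeta3 ^ i * cnj (addchar_set n \<mu> (D i))"
      by (simp add: addchar_set_def sum_distrib_left)
  qed
  finally show ?thesis .
qed

lemma norm_walsh3_partition:
  fixes D :: "nat \<Rightarrow> 'a::{field,finite} set" and f :: "'a \<Rightarrow> nat"
  assumes "(\<Union>i<3. D i) = UNIV"
    and "\<forall>i<3. \<forall>j<3. i \<noteq> j \<longrightarrow> D i \<inter> D j = {}"
    and "\<forall>i<3. \<forall>x\<in>D i. f x = i"
  shows "cmod (walsh3 n f \<mu>) = cmod (\<Sum>i<3. addchar_set n \<mu> (D i) * cnj (zeta3 ^ i))"
proof -
  have "walsh3 n f \<mu> = cnj (\<Sum>i<3. addchar_set n \<mu> (D i) * cnj (zeta3 ^ i))"
    unfolding walsh3_partition[OF assms] by (simp add: mult.commute)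
  then show ?thesis by (metis complex_mod_cnj)
qed

lemma norm_walsh3_zero:
  fixes D :: "nat \<Rightarrow> 'a::{field,finite} set" and f :: "'a \<Rightarrow> nat"
  assumes "(\<Union>i<3. D i) = UNIV"
    and "\<forall>i<3. \<forall>j<3. i \<noteq> j \<longrightarrow> D i \<inter> D j = {}"
    and "\<forall>i<3. \<forall>x\<in>D i. f x = i"
  shows "cmod (walsh3 n f 0) = cmod (\<Sum>i<3. complex_of_real (card (D i)) * zeta3 ^ i)"
proof -
  \<comment> \<open>The unit is not simply 1: in characteristic 2 the junk value of \<open>f3_rep 0\<close> is unknown.\<close>
  define u where "u = zeta3 ^ f3_rep (trace3 n (0::'a))"
  have "addchar_set n 0 (D i) = of_nat (card (D i)) * u" for i
    unfolding addchar_set_def addchar_def u_def by simp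
  then have "walsh3 n f 0 = cnj u * (\<Sum>i<3. complex_of_real (card (D i)) * zeta3 ^ i)"
    unfolding walsh3_partition[OF assms] by (simp add: sum_distrib_left algebra_simps)
  then show ?thesis by (simp add: norm_mult u_def norm_power norm_zeta3)
qed

lemma powr_half_square:
  fixes b :: real
  shows "(b powr (x / 2))\<^sup>2 = b powr x"
proof -
  have "(b powr (x / 2))\<^sup>2 = b powr (x / 2 + x / 2)"
    by (simp only: power2_eq_square powr_add)
  then show ?thesis by simp
qed

lemma powr_half_add_2:
  fixes b :: real
  assumes "0 < b"
  shows "b powr ((x + 2) / 2) = b * b powr (x / 2)"
  using assms by (simp add: add_divide_distrib powr_add)

theorem mainTheorem6:
  fixes n s :: nat and D :: "nat \<Rightarrow> 'a::{field,finite} set" and f :: "'a \<Rightarrow> nat"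
  defines "lam \<equiv> 3 powr ((real n + real s - 1) / 2)"
  assumes card_F: "card (UNIV :: 'a set) = 3 ^ n"
    and n_pos: "n \<ge> 1"
    and lam_int: "lam \<in> \<int>"
    and part_cover: "(\<Union>i<3. D i) = UNIV"
    and part_disj: "\<forall>i<3. \<forall>j<3. i \<noteq> j \<longrightarrow> D i \<inter> D j = {}"
    and pgds: "\<forall>i<3. partial_geometric_difference_set (D i)"
    and char_vals: "\<forall>a. a \<noteq> 0 \<longrightarrow> (\<forall>i<3. addchar_set n a (D i) \<in>
        {0, complex_of_real lam, - complex_of_real lam,
         complex_of_real lam * zeta3, - complex_of_real lam * zeta3,
         complex_of_real lam * zeta3^2, - complex_of_real lam * zeta3^2})"
    and sizes:
      "(card (D 0) = card (D 1) \<and> card (D 1) = card (D 2)) \<or>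
       (\<exists>i j k. {i, j, k} = {0, 1, 2::nat} \<and>
          real (card (D i)) = 3 ^ (n - 1) - 3 powr ((real n + real s - 2) / 2) \<and>
          real (card (D j)) = 3 ^ (n - 1) - 3 powr ((real n + real s - 2) / 2) \<and>
          real (card (D k)) = 3 ^ (n - 1) + 2 * 3 powr ((real n + real s - 2) / 2)) \<or>
       (\<exists>i j k. {i, j, k} = {0, 1, 2::nat} \<and>
          real (card (D i)) = 3 ^ (n - 1) + 3 powr ((real n + real s - 2) / 2) \<and>
          real (card (D j)) = 3 ^ (n - 1) + 3 powr ((real n + real s - 2) / 2) \<and>
          real (card (D k)) = 3 ^ (n - 1) - 2 * 3 powr ((real n + real s - 2) / 2))"
    and inner_vals: "\<forall>a. a \<noteq> 0 \<longrightarrow>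
        (cmod (\<Sum>i<3. addchar_set n a (D i) * cnj (zeta3 ^ i)))\<^sup>2 \<in> {0, 3 * lam\<^sup>2}"
    and f_def: "\<forall>i<3. \<forall>x\<in>D i. f x = i"
  shows "plateaued3 n s f"
  unfolding plateaued3_def
proof
  fix \<mu> :: 'a
  let ?P = "3 powr ((real n + real s) / 2)" and ?B = "3 powr ((real n + real s - 2) / 2)"
  have P_eq: "?P = 3 * ?B"
    using powr_half_add_2[of 3 "real n + real s - 2"] by simp
  show "cmod (walsh3 n f \<mu>) \<in> {0, ?P}"
  proof (cases "\<mu> = 0")
    case False
    with inner_vals have "(cmod (walsh3 n f \<mu>))\<^sup>2 \<in> {0, ?P\<^sup>2}"
      unfolding norm_walsh3_partition[OF part_cover part_disj f_def] lam_def
      by (simp add: powr_half_square powr_diff)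
    then show ?thesis by (auto intro: power2_eq_imp_eq)
  next
    case True
    have "cmod (\<Sum>i<3. complex_of_real (card (D i)) * zeta3 ^ i) \<in> {0, 3 * ?B}"
      by (rule norm_sum_zeta3_powers_size_patterns[where N = "3 ^ (n - 1)"]) (use sizes in auto)
    then show ?thesis
      using True P_eq norm_walsh3_zero[OF part_cover part_disj f_def] by simp
  qed
qed

end
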